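(* Let $\Sigma=(I,X,\mathcal U,\phi,Y,h)$ be a forward complete control system with outputs. Then the following statements are equivalent: (1) $\Sigma$ is IOS; (2) $\Sigma$ is OUAG, OCEP and BORS; (3) $\Sigma$ is OUAG, OULS and BORS; (4) $\Sigma$ is OUAG and OUGS; (5) $\Sigma$ is OCAG and OULS.
   Context: Let $I\in\{\mathbb N_0,\mathbb R_0^+\}$. A forward complete control system with outputs $\Sigma=(I,X,\mathcal U,\phi,Y,h)$ consists of: a normed space $(X,\|\cdot\|_X)$; a vector space $U$ and a normed linear subspace $(\mathcal U,\|\cdot\|_{\mathcal U})$ of $\{u:I\to U\}$ such that for all $u\in\mathcal U$ and $\tau\in I$, $u(\cdot+\tau)\in\mathcal U$ with $\|u(\cdot+\tau)\|_{\mathcal U}\le\|u\|_{\mathcal U}$, and for all $t_2\ge t_1\ge 0$ the function $u|_{[t_1,t_2]}$ (equal to $u$ on $[t_1,t_2]$ and $0$ elsewhere) lies in $\mathcal U$ with $\|u|_{[t_1,t_2]}\|_{\mathcal U}\le\|u\|_{\mathcal U}$; a map $\phi:I\times X\times\mathcal U\to X$ with $\phi(0,x,u)=x$, causality (if $u,\tilde u\in\mathcal U$ agree on $[0,t]$ then $\phi(t,x,u)=\phi(t,x,\tilde u)$), and cocycle property $\phi(t+s,x,u)=\phi(s,\phi(t,x,u),u(t+\cdot))$ for all $t,s\in I$; a normed space $(Y,\|\cdot\|_Y)$ and a map $h:X\times U\to Y$. Write $y(t,x,u)=h(\phi(t,x,u),u(t))$. $B_r=\{x\in X:\|x\|_X<r\}$,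 $B_{r,\mathcal U}=\{u\in\mathcal U:\|u\|_{\mathcal U}<r\}$. $\mathcal K$: continuous strictly increasing $\gamma:\mathbb R_0^+\to\mathbb R_0^+$ with $\gamma(0)=0$; $\mathcal K_\infty$: unbounded $\mathcal K$-functions; $\mathcal L$: continuous decreasing functions tending to $0$; $\mathcal{KL}$: $\beta$ with $\beta(\cdot,t)\in\mathcal K$ for all $t$ and $\beta(r,\cdot)\in\mathcal L$ for all $r>0$. All statements below quantify over $x\in X$, $u\in\mathcal U$, $t\in I$. IOS: $\exists\beta\in\mathcal{KL},\gamma\in\mathcal K_\infty$ with $\|y(t,x,u)\|_Y\le\beta(\|x\|_X,t)+\gamma(\|u\|_{\mathcal U})$ for all $x,u,t$. OCEP: for every $\tau\in I$ and $\varepsilon>0$ there is $\delta>0$ such that $t\le\tau$, $\|x\|_X\le\delta$, $\|u\|_{\mathcal U}\le\delta$ imply $\|y(t,x,u)\|_Y\le\varepsilon$. BORS: for all $C>0$, $\tau\in I$: $\sup\{\|y(t,x,u)\|_Y:\|x\|_X<C,\|u\|_{\mathcal U}<C,t<\tau\}<\infty$. OULS: $\exists r>0,\sigma,\gamma\in\mathcal K_\infty$ such that $\|y(t,x,u)\|_Y\le\sigma(\|x\|_X)+\gamma(\|u\|_{\mathcal U})$ for all $x\in B_r,u\in B_{r,\mathcal U},t\in I$. OUGS: $\exists\sigma,\gamma\in\mathcal K_\infty$ with the same inequality for all $x\in X,u\in\mathcal U,t\in I$. OUAG: $\exists\gamma\in\mathcal K_\infty$ such that for all $\varepsilon,r,s>0$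 there is $\tau\in I$ with $\|y(t,x,u)\|_Y\le\varepsilon+\gamma(\|u\|_{\mathcal U})$ for all $x\in B_r$, $u\in B_{s,\mathcal U}$, $t\ge\tau$. OCAG: $\exists\beta\in\mathcal{KL},\gamma\in\mathcal K_\infty,c\ge0$ with $\|y(t,x,u)\|_Y\le\beta(\|x\|_X+c,t)+\gamma(\|u\|_{\mathcal U})$ for all $x,u,t$. *)

theory Defs
  imports "HOL-Analysis.Analysis"
begin

definition class_K :: "(real \<Rightarrow> real) \<Rightarrow> bool" where
  "class_K g \<longleftrightarrow> continuous_on {0..} g \<and> strict_mono_on {0..} g \<and> g 0 = 0"

definition class_Kinf :: "(real \<Rightarrow> real) \<Rightarrow> bool" where
  "class_Kinf g \<longleftrightarrow> class_K g \<and> (\<forall>M. \<exists>r\<ge>0. g r > M)"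

definition class_L :: "(real \<Rightarrow> real) \<Rightarrow> bool" where
  "class_L f \<longleftrightarrow> continuous_on {0..} f \<and> antimono_on {0..} f \<and>
     (f \<longlongrightarrow> 0) at_top"

definition class_KL :: "(real \<Rightarrow> real \<Rightarrow> real) \<Rightarrow> bool" where
  "class_KL \<beta> \<longleftrightarrow> (\<forall>t\<ge>0. class_K (\<lambda>r. \<beta> r t)) \<and> (\<forall>r>0. class_L (\<lambda>t. \<beta> r t))"

text \<open>Inputs are functions from time to the input value space 'u, represented as functions on
  the reals which vanish outside T.\<close>

definition shift_inp :: "real set \<Rightarrow> real \<Rightarrow> (real \<Rightarrow> 'u::zero) \<Rightarrow> real \<Rightarrow> 'u" where
  "shift_inp T \<tau> u = (\<lambda>t. if t \<in> T then u (t + \<tau>) else 0)"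

definition restr_inp :: "real \<Rightarrow> real \<Rightarrow> (real \<Rightarrow> 'u::zero) \<Rightarrow> real \<Rightarrow> 'u" where
  "restr_inp t1 t2 u = (\<lambda>t. if t1 \<le> t \<and> t \<le> t2 then u t else 0)"

definition ctrl_sys ::
  "real set \<Rightarrow> (real \<Rightarrow> 'u::real_vector) set \<Rightarrow> ((real \<Rightarrow> 'u) \<Rightarrow> real)
   \<Rightarrow> (real \<Rightarrow> 'x::real_normed_vector \<Rightarrow> (real \<Rightarrow> 'u) \<Rightarrow> 'x)
   \<Rightarrow> ('x \<Rightarrow> 'u \<Rightarrow> 'y::real_normed_vector) \<Rightarrow> bool" where
  "ctrl_sys T Us nU \<phi> h \<longleftrightarrow>
     (T = \<nat> \<or> T = {0..}) \<and>
     \<comment> \<open>Us is a linear subspace of the functions T \<rightarrow> U\<close>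
     (\<forall>u\<in>Us. \<forall>t. t \<notin> T \<longrightarrow> u t = 0) \<and>
     (\<lambda>_. 0) \<in> Us \<and> (\<forall>u\<in>Us. \<forall>v\<in>Us. (\<lambda>t. u t + v t) \<in> Us) \<and> (\<forall>a. \<forall>u\<in>Us. (\<lambda>t. a *\<^sub>R u t) \<in> Us) \<and>
     \<comment> \<open>nU is a norm on Us\<close>
     (\<forall>u\<in>Us. nU u \<ge> 0 \<and> (nU u = 0 \<longleftrightarrow> u = (\<lambda>_. 0))) \<and>
     (\<forall>a. \<forall>u\<in>Us. nU (\<lambda>t. a *\<^sub>R u t) = \<bar>a\<bar> * nU u) \<and>
     (\<forall>u\<in>Us. \<forall>v\<in>Us. nU (\<lambda>t. u t + v t) \<le> nU u + nU v) \<and>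
     \<comment> \<open>shift and restriction axioms\<close>
     (\<forall>u\<in>Us. \<forall>\<tau>\<in>T. shift_inp T \<tau> u \<in> Us \<and> nU (shift_inp T \<tau> u) \<le> nU u) \<and>
     (\<forall>u\<in>Us. \<forall>t1 t2. 0 \<le> t1 \<and> t1 \<le> t2 \<longrightarrow>
         restr_inp t1 t2 u \<in> Us \<and> nU (restr_inp t1 t2 u) \<le> nU u) \<and>
     \<comment> \<open>identity property\<close>
     (\<forall>x. \<forall>u\<in>Us. \<phi> 0 x u = x) \<and>
     \<comment> \<open>causality\<close>
     (\<forall>t\<in>T. \<forall>x. \<forall>u\<in>Us. \<forall>v\<in>Us. (\<forall>s\<in>{0..t}. u s = v s) \<longrightarrow> \<phi> t x u = \<phi> t x v) \<and>
     \<comment> \<open>cocycle property\<close>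
     (\<forall>t\<in>T. \<forall>s\<in>T. \<forall>x. \<forall>u\<in>Us. \<phi> (t + s) x u = \<phi> s (\<phi> t x u) (shift_inp T t u))"

definition outp :: "(real \<Rightarrow> 'x \<Rightarrow> (real \<Rightarrow> 'u) \<Rightarrow> 'x) \<Rightarrow> ('x \<Rightarrow> 'u \<Rightarrow> 'y)
   \<Rightarrow> real \<Rightarrow> 'x \<Rightarrow> (real \<Rightarrow> 'u) \<Rightarrow> 'y" where
  "outp \<phi> h t x u = h (\<phi> t x u) (u t)"

definition IOS where
  "IOS T Us nU \<phi> h \<longleftrightarrow> (\<exists>\<beta> \<gamma>. class_KL \<beta> \<and> class_Kinf \<gamma> \<and>
     (\<forall>x. \<forall>u\<in>Us. \<forall>t\<in>T. norm (outp \<phi> h t x u) \<le> \<beta> (norm x) t + \<gamma> (nU u)))"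

definition OCEP where
  "OCEP T Us nU \<phi> h \<longleftrightarrow> (\<forall>\<tau>\<in>T. \<forall>\<epsilon>>0. \<exists>\<delta>>0. \<forall>x. \<forall>u\<in>Us. \<forall>t\<in>T.
     t \<le> \<tau> \<and> norm x \<le> \<delta> \<and> nU u \<le> \<delta> \<longrightarrow> norm (outp \<phi> h t x u) \<le> \<epsilon>)"

definition BORS where
  "BORS T Us nU \<phi> h \<longleftrightarrow> (\<forall>C>0. \<forall>\<tau>\<in>T.
     bdd_above {norm (outp \<phi> h t x u) | t x u.
        norm x < C \<and> u \<in> Us \<and> nU u < C \<and> t \<in> T \<and> t < \<tau>})"

definition OULS where
  "OULS T Us nU \<phi> h \<longleftrightarrow> (\<exists>r>0. \<exists>\<sigma> \<gamma>. class_Kinf \<sigma> \<and> class_Kinf \<gamma> \<and>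
     (\<forall>x. \<forall>u\<in>Us. \<forall>t\<in>T. norm x < r \<and> nU u < r \<longrightarrow>
        norm (outp \<phi> h t x u) \<le> \<sigma> (norm x) + \<gamma> (nU u)))"

definition OUGS where
  "OUGS T Us nU \<phi> h \<longleftrightarrow> (\<exists>\<sigma> \<gamma>. class_Kinf \<sigma> \<and> class_Kinf \<gamma> \<and>
     (\<forall>x. \<forall>u\<in>Us. \<forall>t\<in>T. norm (outp \<phi> h t x u) \<le> \<sigma> (norm x) + \<gamma> (nU u)))"

definition OUAG where
  "OUAG T Us nU \<phi> h \<longleftrightarrow> (\<exists>\<gamma>. class_Kinf \<gamma> \<and>
     (\<forall>\<epsilon>>0. \<forall>r>0. \<forall>s>0. \<exists>\<tau>\<in>T. \<forall>x. \<forall>u\<in>Us. \<forall>t\<in>T.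
        norm x < r \<and> nU u < s \<and> t \<ge> \<tau> \<longrightarrow> norm (outp \<phi> h t x u) \<le> \<epsilon> + \<gamma> (nU u)))"

definition OCAG where
  "OCAG T Us nU \<phi> h \<longleftrightarrow> (\<exists>\<beta> \<gamma> c. class_KL \<beta> \<and> class_Kinf \<gamma> \<and> c \<ge> 0 \<and>
     (\<forall>x. \<forall>u\<in>Us. \<forall>t\<in>T. norm (outp \<phi> h t x u) \<le> \<beta> (norm x + c) t + \<gamma> (nU u)))"

end

theory Submission
  imports Defs
begin

(* Most implications are immediate: IOS is OCAG with c = 0 and gives OUGS by dropping the decay,
   OCAG gives OUAG and BORS, OUGS gives OULS and BORS, and OULS gives OCEP.

   The two substantial steps construct comparison functions from uniform estimates.
   OUAG, OCEP and BORS make the output small for small data and bounded for bounded data,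
   uniformly in time, and any such family is dominated by a K-infinity function of
   max(|x|, |u|): regularise the supremum of the compressed outputs v/(1+v) over
   |x|, |u| <= r by making it Lipschitz in ln r, and undo the compression.
   OUAG and OUGS together make |y| - gamma(|u|) decay uniformly on bounded sets of initial
   states while staying below sigma(|x|); a KL bound is then the supremum of this family
   penalised in sigma(r) and in t, plus r/(1+t). *)

section \<open>Comparison functions\<close>

lemma class_K_nonneg: "class_K g \<Longrightarrow> 0 \<le> r \<Longrightarrow> 0 \<le> g r"
  unfolding class_K_def by (metis atLeast_iff order.order_iff_strict strict_mono_onD order_refl)

lemma class_K_mono: "class_K g \<Longrightarrow> 0 \<le> a \<Longrightarrow> a \<le> b \<Longrightarrow> g a \<le> g b"
  unfolding class_K_def by (metis atLeast_iff order.order_iff_strict strict_mono_onD order_trans)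

lemma class_K_exists_le:
  assumes "class_K g" and "0 < \<epsilon>"
  shows "\<exists>\<delta>>0. g \<delta> \<le> \<epsilon>"
proof -
  have "(g \<longlongrightarrow> 0) (at 0 within {0..})"
    using assms(1) unfolding class_K_def continuous_on_def by (metis atLeast_iff order_refl)
  then have "eventually (\<lambda>r. g r < \<epsilon>) (at 0 within {0..})"
    using assms(2) by (rule order_tendstoD)
  then obtain d where "0 < d" "\<And>r. 0 < r \<Longrightarrow> r < d \<Longrightarrow> g r < \<epsilon>"
    unfolding eventually_at by (auto simp: dist_real_def)
  then show ?thesis by (intro exI[of _ "d / 2"]) (simp add: less_imp_le)
qed

lemma class_K_add: "class_K f \<Longrightarrow> class_K g \<Longrightarrow> class_K (\<lambda>r. f r + g r)"
  unfolding class_K_def strict_mono_on_def by (auto intro: continuous_on_add add_strict_mono)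

lemma class_Kinf_add:
  assumes "class_Kinf f" and "class_K g"
  shows "class_Kinf (\<lambda>r. f r + g r)"
  unfolding class_Kinf_def
proof (intro conjI allI)
  show "class_K (\<lambda>r. f r + g r)"
    using assms class_K_add class_Kinf_def by blast
  fix M
  obtain r where "r \<ge> 0" "f r > M" using assms(1) unfolding class_Kinf_def by blast
  then show "\<exists>r\<ge>0. f r + g r > M"
    using class_K_nonneg[OF assms(2), of r] by (intro exI[of _ r]) auto
qed

lemma class_Kinf_id: "class_Kinf (\<lambda>r. r)"
  unfolding class_Kinf_def class_K_def strict_mono_on_def
proof (intro conjI allI continuous_on_id)
  show "\<exists>r\<ge>0. M < r" for M :: real by (intro exI[of _ "max 0 M + 1"]) auto
qed auto

lemma class_KL_zero: "class_KL \<beta> \<Longrightarrow> 0 \<le> t \<Longrightarrow> \<beta> 0 t = 0"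
  by (simp add: class_KL_def class_K_def)

lemma class_KL_mono: "class_KL \<beta> \<Longrightarrow> 0 \<le> r \<Longrightarrow> r \<le> r' \<Longrightarrow> 0 \<le> t \<Longrightarrow> \<beta> r t \<le> \<beta> r' t"
  using class_K_mono[of "\<lambda>r. \<beta> r t" r r'] by (simp add: class_KL_def)

lemma class_KL_antimono:
  assumes "class_KL \<beta>" and "0 \<le> r" and "0 \<le> t" and "t \<le> t'"
  shows "\<beta> r t' \<le> \<beta> r t"
proof (cases "r = 0")
  case True
  then show ?thesis using assms class_KL_zero[of \<beta>] by simp
next
  case False
  then have "antimono_on {0..} (\<lambda>t. \<beta> r t)"
    using assms by (simp add: class_KL_def class_L_def)
  then show ?thesis using assms unfolding monotone_on_def by auto
qed

lemma class_KL_eventually_le: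
  assumes "class_KL \<beta>" and "0 < r" and "0 < \<epsilon>"
  shows "\<exists>\<tau>. \<forall>t\<ge>\<tau>. \<beta> r t \<le> \<epsilon>"
proof -
  have "((\<lambda>t. \<beta> r t) \<longlongrightarrow> 0) at_top"
    using assms by (simp add: class_KL_def class_L_def)
  then have "eventually (\<lambda>t. \<beta> r t < \<epsilon>) at_top"
    using assms(3) by (rule order_tendstoD)
  then show ?thesis
    unfolding eventually_at_top_linorder by (meson less_imp_le)
qed

definition sup0 :: "('i \<Rightarrow> real) \<Rightarrow> 'i set \<Rightarrow> real" where
  "sup0 f I = Sup (insert 0 (f ` I))"

lemma sup0_upper: "bdd_above (f ` I) \<Longrightarrow> i \<in> I \<Longrightarrow> f i \<le> sup0 f I"
  unfolding sup0_def by (intro cSup_upper) auto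

lemma sup0_nonneg: "bdd_above (f ` I) \<Longrightarrow> 0 \<le> sup0 f I"
  unfolding sup0_def by (intro cSup_upper) auto

lemma sup0_least: "(\<And>i. i \<in> I \<Longrightarrow> f i \<le> B) \<Longrightarrow> 0 \<le> B \<Longrightarrow> sup0 f I \<le> B"
  unfolding sup0_def by (intro cSup_least) auto

lemma sup0_le_sup0_add:
  assumes "bdd_above (g ` I)" and "\<And>i. i \<in> I \<Longrightarrow> f i \<le> g i + D" and "0 \<le> D"
  shows "sup0 f I \<le> sup0 g I + D"
proof (rule sup0_least)
  show "f i \<le> sup0 g I + D" if "i \<in> I" for i
    using assms(2)[OF that] sup0_upper[OF assms(1) that] by linarith
  show "0 \<le> sup0 g I + D"
    using sup0_nonneg[OF assms(1)] assms(3) by linarith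
qed

lemma continuous_on_if_increment_le:
  fixes f g :: "real \<Rightarrow> real"
  assumes "continuous_on S g" and "\<And>a b. a \<in> S \<Longrightarrow> b \<in> S \<Longrightarrow> \<bar>f a - f b\<bar> \<le> c * \<bar>g a - g b\<bar>"
  shows "continuous_on S f"
  unfolding continuous_on_def
proof
  fix x assume "x \<in> S"
  then have "((\<lambda>y. c * \<bar>g y - g x\<bar>) \<longlongrightarrow> c * \<bar>g x - g x\<bar>) (at x within S)"
    using assms(1) unfolding continuous_on_def by (intro tendsto_intros) auto
  then have "((\<lambda>y. c * \<bar>g y - g x\<bar>) \<longlongrightarrow> 0) (at x within S)"
    by simp
  then have "((\<lambda>y. f y - f x) \<longlongrightarrow> 0) (at x within S)"
    by (rule Lim_null_comparison[rotated])
       (use \<open>x \<in> S\<close> assms(2) in \<open>auto simp: eventually_at_filter\<close>)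
  then show "(f \<longlongrightarrow> f x) (at x within S)"
    by (rule LIM_zero_cancel)
qed

lemma continuous_on_atLeast_if_tendsto_right:
  fixes f :: "real \<Rightarrow> real"
  assumes "(f \<longlongrightarrow> f a) (at_right a)" and "continuous_on {a<..} f"
  shows "continuous_on {a..} f"
  unfolding continuous_on_def
proof
  fix x assume "x \<in> {a..}"
  show "(f \<longlongrightarrow> f x) (at x within {a..})"
  proof (cases "x = a")
    case True
    have "at a within {a..} = at_right a"
      by (rule at_within_nhd[of _ UNIV]) auto
    then show ?thesis using True assms(1) by simp
  next
    case False
    then have "at x within {a..} = at x within {a<..}"
      using \<open>x \<in> {a..}\<close> by (intro at_within_nhd[of _ "{a<..}"]) auto
    then show ?thesis
      using assms(2) \<open>x \<in> {a..}\<close> False unfolding continuous_on_def by auto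
  qed
qed

section \<open>A class KL bound for uniformly decaying families\<close>

locale uniformly_decaying_family =
  fixes I :: "'i set" and \<sigma> :: "real \<Rightarrow> real" and \<rho> \<theta> a :: "'i \<Rightarrow> real"
  assumes class_Kinf_\<sigma>: "class_Kinf \<sigma>"
    and \<rho>_nonneg: "i \<in> I \<Longrightarrow> 0 \<le> \<rho> i"
    and \<theta>_nonneg: "i \<in> I \<Longrightarrow> 0 \<le> \<theta> i"
    and le_\<sigma>: "i \<in> I \<Longrightarrow> a i \<le> \<sigma> (\<rho> i)"
    and uniform_decay: "0 < \<epsilon> \<Longrightarrow> 0 < R \<Longrightarrow> \<exists>\<tau>. \<forall>i\<in>I. \<rho> i < R \<and> \<tau> \<le> \<theta> i \<longrightarrow> a i \<le> \<epsilon>"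
begin

lemma class_K_\<sigma>: "class_K \<sigma>"
  using class_Kinf_\<sigma> by (simp add: class_Kinf_def)

text \<open>The penalties make \<open>env\<close> Lipschitz in \<open>\<sigma> r\<close> and in \<open>t\<close>; the factor 2 makes every member
  with \<open>\<sigma> (\<rho> i) > 2 * \<sigma> r\<close> negative, which is what lets \<open>env\<close> decay in \<open>t\<close>.\<close>
definition penalized :: "real \<Rightarrow> real \<Rightarrow> 'i \<Rightarrow> real" where
  "penalized r t i = a i - 2 * max 0 (\<sigma> (\<rho> i) - \<sigma> r) - max 0 (t - \<theta> i)"

definition env :: "real \<Rightarrow> real \<Rightarrow> real" where
  "env r t = sup0 (penalized r t) I"

lemma penalized_le: "i \<in> I \<Longrightarrow> penalized r t i \<le> \<sigma> r - max 0 (\<sigma> (\<rho> i) - \<sigma> r) - max 0 (t - \<theta> i)"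
  using le_\<sigma>[of i] by (simp add: penalized_def max_def)

lemma penalized_le_\<sigma>: "i \<in> I \<Longrightarrow> penalized r t i \<le> \<sigma> r"
  using penalized_le[of i r t] by (simp add: max_def split: if_splits)

lemma bdd_above_penalized: "bdd_above (penalized r t ` I)"
  using penalized_le_\<sigma> by (intro bdd_aboveI2[of _ _ "\<sigma> r"])

lemma env_nonneg: "0 \<le> env r t"
  unfolding env_def using bdd_above_penalized by (rule sup0_nonneg)

lemma env_le: "0 \<le> r \<Longrightarrow> env r t \<le> \<sigma> r"
  unfolding env_def using penalized_le_\<sigma> class_K_nonneg[OF class_K_\<sigma>]
  by (intro sup0_least)

lemma le_env: "i \<in> I \<Longrightarrow> a i \<le> env (\<rho> i) (\<theta> i)"
  using sup0_upper[OF bdd_above_penalized, of i "\<rho> i" "\<theta> i"]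
  by (simp add: env_def penalized_def)

lemma env_le_env_radius: "env r t \<le> env r' t + 2 * \<bar>\<sigma> r - \<sigma> r'\<bar>"
  unfolding env_def using bdd_above_penalized
  by (rule sup0_le_sup0_add) (auto simp: penalized_def max_def abs_if)

lemma env_mono:
  assumes "0 \<le> r" and "r \<le> r'"
  shows "env r t \<le> env r' t"
proof -
  have "\<sigma> r \<le> \<sigma> r'" using class_K_mono[OF class_K_\<sigma> assms] .
  then have "env r t \<le> env r' t + 0"
    unfolding env_def using bdd_above_penalized
    by (rule_tac sup0_le_sup0_add) (auto simp: penalized_def max_def)
  then show ?thesis by simp
qed

lemma env_le_env_time: "env r t \<le> env r t' + \<bar>t - t'\<bar>"
  unfolding env_def using bdd_above_penalized
  by (rule sup0_le_sup0_add) (auto simp: penalized_def max_def abs_if)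

lemma env_antimono:
  assumes "t \<le> t'"
  shows "env r t' \<le> env r t"
proof -
  have "env r t' \<le> env r t + 0"
    unfolding env_def using bdd_above_penalized assms
    by (rule_tac sup0_le_sup0_add) (auto simp: penalized_def max_def)
  then show ?thesis by simp
qed

lemma env_eventually_le:
  assumes "0 \<le> r" and "0 < \<epsilon>"
  shows "\<exists>t0. \<forall>t\<ge>t0. env r t \<le> \<epsilon>"
proof -
  obtain R where "0 \<le> R" and R: "2 * \<sigma> r < \<sigma> R"
    using class_Kinf_\<sigma> unfolding class_Kinf_def by blast
  have "\<sigma> 0 = 0" and \<sigma>r: "0 \<le> \<sigma> r"
    using class_K_\<sigma> class_K_nonneg[OF class_K_\<sigma> assms(1)] by (auto simp: class_K_def)
  with \<open>0 \<le> R\<close> R have "0 < R"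
    by (metis dual_order.order_iff_strict linorder_not_less mult_nonneg_nonneg zero_le_numeral)
  then obtain \<tau> where \<tau>: "\<forall>i\<in>I. \<rho> i < R \<and> \<tau> \<le> \<theta> i \<longrightarrow> a i \<le> \<epsilon>"
    using uniform_decay assms(2) by blast
  have "env r t \<le> \<epsilon>" if t: "\<tau> + \<sigma> r \<le> t" for t
    unfolding env_def
  proof (rule sup0_least)
    fix i assume i: "i \<in> I"
    consider "\<sigma> r \<le> t - \<theta> i" | "\<tau> \<le> \<theta> i" "\<rho> i < R" | "R \<le> \<rho> i"
      using t by linarith
    then show "penalized r t i \<le> \<epsilon>"
    proof cases
      case 1
      then show ?thesis using penalized_le[OF i, of r t] assms(2) by simp
    next
      case 2
      then have "a i \<le> \<epsilon>" using \<tau> i by blast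
      then show ?thesis by (auto simp: penalized_def max_def)
    next
      case 3
      then have "\<sigma> R \<le> \<sigma> (\<rho> i)" using class_K_mono[OF class_K_\<sigma> \<open>0 \<le> R\<close>] by blast
      then show ?thesis
        using penalized_le[OF i, of r t] R \<sigma>r assms(2) by (simp add: max_def split: if_splits)
    qed
  qed (use assms(2) in simp)
  then show ?thesis by blast
qed

lemma env_tendsto_0: "0 \<le> r \<Longrightarrow> ((\<lambda>t. env r t) \<longlongrightarrow> 0) at_top"
proof (rule order_tendstoI)
  fix \<epsilon> :: real assume "0 \<le> r" "0 < \<epsilon>"
  then obtain t0 where "\<forall>t\<ge>t0. env r t \<le> \<epsilon> / 2"
    using env_eventually_le[of r "\<epsilon> / 2"] by auto
  then show "eventually (\<lambda>t. env r t < \<epsilon>) at_top"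
    unfolding eventually_at_top_linorder using \<open>0 < \<epsilon>\<close> by force
next
  show "eventually (\<lambda>t. \<epsilon> < env r t) at_top" if "\<epsilon> < 0" for \<epsilon> :: real
    using that env_nonneg by (intro always_eventually allI) (rule order_less_le_trans)
qed

lemma class_K_env_plus: "0 \<le> t \<Longrightarrow> class_K (\<lambda>r. env r t + r / (1 + t))"
  unfolding class_K_def
proof (intro conjI strict_mono_onI)
  assume "0 \<le> t"
  have "\<bar>env r t - env r' t\<bar> \<le> 2 * \<bar>\<sigma> r - \<sigma> r'\<bar>" for r r'
    using env_le_env_radius[of r t r'] env_le_env_radius[of r' t r] by (simp add: abs_le_iff abs_minus_commute)
  then have "continuous_on {0..} (\<lambda>r. env r t)"
    using class_K_\<sigma> unfolding class_K_def by (blast intro: continuous_on_if_increment_le)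
  then show "continuous_on {0..} (\<lambda>r. env r t + r / (1 + t))"
    using \<open>0 \<le> t\<close> by (intro continuous_intros) auto
  show "env r t + r / (1 + t) < env s t + s / (1 + t)" if "r \<in> {0..}" "r < s" for r s
  proof -
    have "r / (1 + t) < s / (1 + t)"
      using that \<open>0 \<le> t\<close> by (intro divide_strict_right_mono) auto
    then show ?thesis using env_mono[of r s t] that by simp
  qed
  show "env 0 t + 0 / (1 + t) = 0"
    using env_le[of 0 t] env_nonneg[of 0 t] class_K_\<sigma> by (simp add: class_K_def)
qed

lemma class_L_env_plus: "0 < r \<Longrightarrow> class_L (\<lambda>t. env r t + r / (1 + t))"
  unfolding class_L_def
proof (intro conjI monotone_onI)
  assume "0 < r"
  have "\<bar>env r t - env r t'\<bar> \<le> 1 * \<bar>t - t'\<bar>" for t t'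
    using env_le_env_time[of r t t'] env_le_env_time[of r t' t] by (simp add: abs_le_iff abs_minus_commute)
  then have "continuous_on {0..} (\<lambda>t. env r t)"
    by (blast intro: continuous_on_if_increment_le continuous_on_id)
  then show "continuous_on {0..} (\<lambda>t. env r t + r / (1 + t))"
    by (intro continuous_intros) auto
  show "env r t' + r / (1 + t') \<le> env r t + r / (1 + t)" if "t \<in> {0..}" "t \<le> t'" for t t'
    using env_antimono[of t t' r] that \<open>0 < r\<close> by (auto intro!: add_mono divide_left_mono)
  have "filterlim (\<lambda>t::real. 1 + t) at_top at_top"
    by (rule filterlim_tendsto_add_at_top[OF tendsto_const filterlim_ident])
  then have "((\<lambda>t. r / (1 + t)) \<longlongrightarrow> 0) at_top"
    by (intro real_tendsto_divide_at_top[OF tendsto_const])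
  then show "((\<lambda>t. env r t + r / (1 + t)) \<longlongrightarrow> 0) at_top"
    using env_tendsto_0[of r] \<open>0 < r\<close> tendsto_add by fastforce
qed

lemma exists_class_KL_bound: "\<exists>\<beta>. class_KL \<beta> \<and> (\<forall>i\<in>I. a i \<le> \<beta> (\<rho> i) (\<theta> i))"
proof (intro exI conjI ballI)
  show "class_KL (\<lambda>r t. env r t + r / (1 + t))"
    unfolding class_KL_def using class_K_env_plus class_L_env_plus by blast
  show "a i \<le> env (\<rho> i) (\<theta> i) + \<rho> i / (1 + \<theta> i)" if "i \<in> I" for i
    using le_env[OF that] \<rho>_nonneg[OF that] \<theta>_nonneg[OF that] by (smt (verit) divide_nonneg_nonneg)
qed

end

section \<open>A class K-infinity bound for families small near zero and locally bounded\<close>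

locale small_and_bounded_family =
  fixes I :: "'i set" and m v :: "'i \<Rightarrow> real"
  assumes m_nonneg: "i \<in> I \<Longrightarrow> 0 \<le> m i"
    and v_nonneg: "i \<in> I \<Longrightarrow> 0 \<le> v i"
    and small: "0 < \<epsilon> \<Longrightarrow> \<exists>\<delta>>0. \<forall>i\<in>I. m i < \<delta> \<longrightarrow> v i \<le> \<epsilon>"
    and bounded: "0 < R \<Longrightarrow> \<exists>M. \<forall>i\<in>I. m i < R \<longrightarrow> v i \<le> M"
begin

lemma v_eq_0:
  assumes "i \<in> I" and "m i = 0"
  shows "v i = 0"
proof (rule ccontr)
  assume "v i \<noteq> 0"
  then have "0 < v i" using v_nonneg[OF assms(1)] by simp
  then obtain \<delta> where "0 < \<delta>" and "\<forall>j\<in>I. m j < \<delta> \<longrightarrow> v j \<le> v i / 2"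
    using small[of "v i / 2"] by auto
  then have "v i \<le> v i / 2" using assms by simp
  then show False using \<open>0 < v i\<close> by simp
qed

text \<open>Compressing \<open>v\<close> to \<open>v / (1 + v) < 1\<close> keeps the supremum finite, and the penalty makes
  \<open>env\<close> 1-Lipschitz in \<open>ln r\<close>. Members with \<open>m i = 0\<close> are left out of the supremum: \<open>ln 0\<close> is a
  junk value, and \<open>v\<close> vanishes there anyway.\<close>
definition penalized :: "real \<Rightarrow> 'i \<Rightarrow> real" where
  "penalized r i = v i / (1 + v i) - max 0 (ln (m i) - ln r)"

definition env :: "real \<Rightarrow> real" where
  "env r = sup0 (penalized r) {i \<in> I. 0 < m i}"

lemma compress_le_1: "i \<in> I \<Longrightarrow> v i / (1 + v i) \<le> 1"
  using v_nonneg[of i] by simp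

lemma penalized_le_1: "i \<in> I \<Longrightarrow> penalized r i \<le> 1"
  using compress_le_1[of i] by (simp add: penalized_def max_def)

lemma bdd_above_penalized: "bdd_above (penalized r ` {i \<in> I. 0 < m i})"
  using penalized_le_1 by (intro bdd_aboveI2[of _ _ 1]) auto

lemma env_nonneg: "0 \<le> env r"
  unfolding env_def using bdd_above_penalized by (rule sup0_nonneg)

lemma le_env:
  assumes "i \<in> I" and "0 < m i" and "m i \<le> r"
  shows "v i / (1 + v i) \<le> env r"
proof -
  have "penalized r i = v i / (1 + v i)"
    using assms by (simp add: penalized_def)
  then show ?thesis
    using sup0_upper[OF bdd_above_penalized, of i r] assms by (simp add: env_def)
qed

lemma env_le:
  assumes "0 < r" and "0 \<le> M" and M: "\<forall>i\<in>I. m i < exp 1 * r \<longrightarrow> v i \<le> M"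
  shows "env r \<le> M / (1 + M)"
  unfolding env_def
proof (rule sup0_least)
  fix i assume i: "i \<in> {i \<in> I. 0 < m i}"
  show "penalized r i \<le> M / (1 + M)"
  proof (cases "m i < exp 1 * r")
    case True
    then have "v i / (1 + v i) \<le> M / (1 + M)"
      using M i v_nonneg[of i] by (auto simp: field_simps)
    then show ?thesis by (simp add: penalized_def)
  next
    case False
    then have "ln (exp 1 * r) \<le> ln (m i)"
      using assms(1) i by simp
    then have "1 + ln r \<le> ln (m i)"
      using assms(1) by (simp add: ln_mult)
    then have "penalized r i \<le> 0"
      using compress_le_1[of i] i by (simp add: penalized_def)
    moreover have "0 \<le> M / (1 + M)" using assms(2) by simp
    ultimately show ?thesis by linarith
  qed
qed (use assms(2) in simp)

lemma env_less_1:
  assumes "0 < r"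
  shows "env r < 1"
proof -
  obtain M where "\<forall>i\<in>I. m i < exp 1 * r \<longrightarrow> v i \<le> M"
    using bounded[of "exp 1 * r"] assms by auto
  then have "env r \<le> max 0 M / (1 + max 0 M)"
    using assms by (intro env_le) auto
  also have "\<dots> < 1" by simp
  finally show ?thesis .
qed

lemma env_mono:
  assumes "0 < r" and "r \<le> r'"
  shows "env r \<le> env r'"
proof -
  have "ln r \<le> ln r'" using assms by simp
  then have "env r \<le> env r' + 0"
    unfolding env_def using bdd_above_penalized
    by (rule_tac sup0_le_sup0_add) (auto simp: penalized_def max_def)
  then show ?thesis by simp
qed

lemma continuous_on_env: "continuous_on {0<..} env"
proof (rule continuous_on_if_increment_le)
  show "continuous_on {0<..} (ln :: real \<Rightarrow> real)"
    by (intro continuous_intros) auto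
  have "env r \<le> env r' + \<bar>ln r - ln r'\<bar>" for r r'
    unfolding env_def using bdd_above_penalized
    by (rule sup0_le_sup0_add) (auto simp: penalized_def max_def abs_if)
  then show "\<bar>env r - env r'\<bar> \<le> 1 * \<bar>ln r - ln r'\<bar>" for r r'
    by (smt (verit) abs_minus_commute)
qed

lemma env_tendsto_0: "(env \<longlongrightarrow> 0) (at_right 0)"
proof (rule order_tendstoI)
  fix \<epsilon> :: real assume "0 < \<epsilon>"
  then obtain \<delta> where "0 < \<delta>" and \<delta>: "\<forall>i\<in>I. m i < \<delta> \<longrightarrow> v i \<le> \<epsilon> / 2"
    using small[of "\<epsilon> / 2"] by auto
  have "env r < \<epsilon>" if "0 < r" "r < \<delta> / 3" for r
  proof -
    have "exp 1 * r \<le> 3 * r"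
      using exp_le that by (intro mult_right_mono) auto
    then have "exp 1 * r < \<delta>"
      using that by linarith
    then have "env r \<le> (\<epsilon> / 2) / (1 + \<epsilon> / 2)"
      using that \<delta> \<open>0 < \<epsilon>\<close> by (intro env_le) auto
    also have "\<dots> \<le> \<epsilon> / 2" using \<open>0 < \<epsilon>\<close> by (simp add: divide_le_eq)
    also have "\<dots> < \<epsilon>" using \<open>0 < \<epsilon>\<close> by simp
    finally show ?thesis .
  qed
  then show "eventually (\<lambda>r. env r < \<epsilon>) (at_right 0)"
    unfolding eventually_at_right_field using \<open>0 < \<delta>\<close> by (intro exI[of _ "\<delta> / 3"]) auto
next
  show "eventually (\<lambda>r. \<epsilon> < env r) (at_right 0)" if "\<epsilon> < 0" for \<epsilon> :: real
    using that env_nonneg by (intro always_eventually allI) (rule order_less_le_trans)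
qed

text \<open>\<open>a / (1 - a)\<close> inverts the compression \<open>v / (1 + v)\<close>.\<close>
definition majorant :: "real \<Rightarrow> real" where
  "majorant r = (if 0 < r then env r / (1 - env r) + r else 0)"

lemma self_le_majorant: "0 < r \<Longrightarrow> r \<le> majorant r"
  using env_nonneg[of r] env_less_1[of r] by (simp add: majorant_def)

lemma majorant_strict_mono:
  assumes "0 < r" and "r < s"
  shows "majorant r < majorant s"
proof -
  have "env r / (1 - env r) \<le> env s / (1 - env s)"
    using env_mono[of r s] env_nonneg[of r] env_less_1[of s] assms by (intro frac_le) auto
  then show ?thesis using assms by (simp add: majorant_def)
qed

lemma class_Kinf_majorant: "class_Kinf majorant"
  unfolding class_Kinf_def class_K_def
proof (intro conjI strict_mono_onI allI)
  let ?f = "\<lambda>r. env r / (1 - env r) + r"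
  have "(?f \<longlongrightarrow> 0 / (1 - 0) + 0) (at_right 0)"
    by (intro tendsto_intros env_tendsto_0) auto
  moreover have "eventually (\<lambda>r. ?f r = majorant r) (at_right 0)"
    using eventually_at_right_less[of 0] by eventually_elim (simp add: majorant_def)
  ultimately have "(majorant \<longlongrightarrow> majorant 0) (at_right 0)"
    by (auto simp: majorant_def intro: Lim_transform_eventually)
  moreover have "continuous_on {0<..} ?f"
    using env_less_1 by (intro continuous_intros continuous_on_env) force
  then have "continuous_on {0<..} majorant"
    by (rule continuous_on_cong[THEN iffD1, rotated 2]) (auto simp: majorant_def)
  ultimately show "continuous_on {0..} majorant"
    by (rule continuous_on_atLeast_if_tendsto_right)
  show "majorant r < majorant s" if "r \<in> {0..}" "r < s" for r s
    using that majorant_strict_mono self_le_majorant[of s] by (cases "r = 0") (auto simp: majorant_def)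
  show "majorant 0 = 0" by (simp add: majorant_def)
  show "\<exists>r\<ge>0. M < majorant r" for M
  proof (intro exI conjI)
    show "M < majorant (max 0 M + 1)"
      using self_le_majorant[of "max 0 M + 1"] by linarith
  qed simp
qed

lemma v_le_majorant:
  assumes "i \<in> I"
  shows "v i \<le> majorant (m i)"
proof (cases "m i = 0")
  case True
  then show ?thesis using v_eq_0[OF assms] by (simp add: majorant_def)
next
  case False
  then have "0 < m i" using m_nonneg[OF assms] by simp
  then have "v i / (1 + v i) \<le> env (m i)" and "env (m i) < 1"
    using le_env[OF assms] env_less_1 by auto
  then have "v i \<le> env (m i) / (1 - env (m i))"
    using v_nonneg[OF assms] by (simp add: field_simps)
  then show ?thesis using \<open>0 < m i\<close> by (simp add: majorant_def)
qed

lemma exists_class_Kinf_bound: "\<exists>\<alpha>. class_Kinf \<alpha> \<and> (\<forall>i\<in>I. v i \<le> \<alpha> (m i))"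
  using class_Kinf_majorant v_le_majorant by blast

end

section \<open>Output stability notions\<close>

locale output_system =
  fixes T :: "real set" and Us :: "(real \<Rightarrow> 'u) set" and nU :: "(real \<Rightarrow> 'u) \<Rightarrow> real"
    and \<phi> :: "real \<Rightarrow> 'x::real_normed_vector \<Rightarrow> (real \<Rightarrow> 'u) \<Rightarrow> 'x"
    and h :: "'x \<Rightarrow> 'u \<Rightarrow> 'y::real_normed_vector"
  assumes time_nonneg: "t \<in> T \<Longrightarrow> 0 \<le> t"
    and time_unbounded: "\<exists>\<tau>\<in>T. a \<le> \<tau>"
    and input_norm_nonneg: "u \<in> Us \<Longrightarrow> 0 \<le> nU u"
begin

abbreviation y :: "real \<Rightarrow> 'x \<Rightarrow> (real \<Rightarrow> 'u) \<Rightarrow> 'y" where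
  "y t x u \<equiv> outp \<phi> h t x u"

lemma BORS_if_bounded_on_balls:
  assumes "\<And>C. 0 < C \<Longrightarrow> \<exists>B. \<forall>x. \<forall>u\<in>Us. \<forall>t\<in>T. norm x < C \<and> nU u < C \<longrightarrow> norm (y t x u) \<le> B"
  shows "BORS T Us nU \<phi> h"
  unfolding BORS_def
proof (intro allI impI ballI)
  fix C :: real and \<tau> assume "0 < C"
  then obtain B where "\<forall>x. \<forall>u\<in>Us. \<forall>t\<in>T. norm x < C \<and> nU u < C \<longrightarrow> norm (y t x u) \<le> B"
    using assms by blast
  then show "bdd_above {norm (y t x u) | t x u. norm x < C \<and> u \<in> Us \<and> nU u < C \<and> t \<in> T \<and> t < \<tau>}"
    by (intro bdd_aboveI[of _ B]) blast
qed

lemma IOS_imp_OCAG: "IOS T Us nU \<phi> h \<Longrightarrow> OCAG T Us nU \<phi> h"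
  unfolding IOS_def OCAG_def by (metis add_0_right order_refl)

lemma IOS_imp_OUGS:
  assumes "IOS T Us nU \<phi> h"
  shows "OUGS T Us nU \<phi> h"
proof -
  obtain \<beta> \<gamma> where \<beta>: "class_KL \<beta>" and \<gamma>: "class_Kinf \<gamma>"
    and bound: "\<forall>x. \<forall>u\<in>Us. \<forall>t\<in>T. norm (y t x u) \<le> \<beta> (norm x) t + \<gamma> (nU u)"
    using assms unfolding IOS_def by blast
  have "class_Kinf (\<lambda>r. r + \<beta> r 0)"
    using \<beta> by (intro class_Kinf_add class_Kinf_id) (simp add: class_KL_def)
  moreover have "norm (y t x u) \<le> (norm x + \<beta> (norm x) 0) + \<gamma> (nU u)" if "u \<in> Us" "t \<in> T" for x u t
  proof -
    have "norm (y t x u) \<le> \<beta> (norm x) t + \<gamma> (nU u)" using bound that by blast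
    moreover have "\<beta> (norm x) t \<le> \<beta> (norm x) 0"
      using class_KL_antimono[OF \<beta>, of "norm x" 0 t] time_nonneg[OF that(2)] by simp
    ultimately show ?thesis using norm_ge_zero[of x] by linarith
  qed
  ultimately show ?thesis unfolding OUGS_def using \<gamma> by blast
qed

lemma OCAG_imp_OUAG:
  assumes "OCAG T Us nU \<phi> h"
  shows "OUAG T Us nU \<phi> h"
proof -
  obtain \<beta> \<gamma> c where \<beta>: "class_KL \<beta>" and \<gamma>: "class_Kinf \<gamma>" and "0 \<le> c"
    and bound: "\<forall>x. \<forall>u\<in>Us. \<forall>t\<in>T. norm (y t x u) \<le> \<beta> (norm x + c) t + \<gamma> (nU u)"
    using assms unfolding OCAG_def by blast
  have "\<exists>\<tau>\<in>T. \<forall>x. \<forall>u\<in>Us. \<forall>t\<in>T. norm x < r \<and> nU u < s \<and> \<tau> \<le> t \<longrightarrow>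
      norm (y t x u) \<le> \<epsilon> + \<gamma> (nU u)" if "0 < \<epsilon>" "0 < r" for \<epsilon> r s
  proof -
    have "0 < r + c" using that \<open>0 \<le> c\<close> by simp
    then obtain t0 where t0: "\<forall>t\<ge>t0. \<beta> (r + c) t \<le> \<epsilon>"
      using class_KL_eventually_le[OF \<beta> _ \<open>0 < \<epsilon>\<close>] by blast
    obtain \<tau> where "\<tau> \<in> T" and "t0 \<le> \<tau>" using time_unbounded by blast
    have "norm (y t x u) \<le> \<epsilon> + \<gamma> (nU u)" if "u \<in> Us" "t \<in> T" "norm x < r" "\<tau> \<le> t" for x u t
    proof -
      have "norm (y t x u) \<le> \<beta> (norm x + c) t + \<gamma> (nU u)" using bound that by blast
      moreover have "\<beta> (norm x + c) t \<le> \<beta> (r + c) t"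
        using class_KL_mono[OF \<beta>, of "norm x + c" "r + c" t] that \<open>0 \<le> c\<close> time_nonneg by simp
      moreover have "\<beta> (r + c) t \<le> \<epsilon>" using t0 \<open>t0 \<le> \<tau>\<close> that(4) by simp
      ultimately show ?thesis by linarith
    qed
    then show ?thesis using \<open>\<tau> \<in> T\<close> by blast
  qed
  then show ?thesis unfolding OUAG_def using \<gamma> by blast
qed

lemma OCAG_imp_BORS:
  assumes "OCAG T Us nU \<phi> h"
  shows "BORS T Us nU \<phi> h"
proof (rule BORS_if_bounded_on_balls)
  obtain \<beta> \<gamma> c where \<beta>: "class_KL \<beta>" and \<gamma>: "class_Kinf \<gamma>" and "0 \<le> c"
    and bound: "\<forall>x. \<forall>u\<in>Us. \<forall>t\<in>T. norm (y t x u) \<le> \<beta> (norm x + c) t + \<gamma> (nU u)"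
    using assms unfolding OCAG_def by blast
  fix C :: real assume "0 < C"
  have "norm (y t x u) \<le> \<beta> (C + c) 0 + \<gamma> C" if "u \<in> Us" "t \<in> T" "norm x < C" "nU u < C" for x u t
  proof -
    have "\<beta> (norm x + c) t \<le> \<beta> (C + c) t"
      using class_KL_mono[OF \<beta>, of "norm x + c" "C + c" t] that \<open>0 \<le> c\<close> time_nonneg by simp
    also have "\<dots> \<le> \<beta> (C + c) 0"
      using class_KL_antimono[OF \<beta>, of "C + c" 0 t] that \<open>0 < C\<close> \<open>0 \<le> c\<close> time_nonneg by simp
    finally have "\<beta> (norm x + c) t \<le> \<beta> (C + c) 0" .
    moreover have "\<gamma> (nU u) \<le> \<gamma> C"
      using class_K_mono[of \<gamma> "nU u" C] \<gamma> input_norm_nonneg that by (simp add: class_Kinf_def)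
    moreover have "norm (y t x u) \<le> \<beta> (norm x + c) t + \<gamma> (nU u)" using bound that by blast
    ultimately show ?thesis by linarith
  qed
  then show "\<exists>B. \<forall>x. \<forall>u\<in>Us. \<forall>t\<in>T. norm x < C \<and> nU u < C \<longrightarrow> norm (y t x u) \<le> B"
    by blast
qed

lemma OUGS_imp_OULS: "OUGS T Us nU \<phi> h \<Longrightarrow> OULS T Us nU \<phi> h"
  unfolding OUGS_def OULS_def by (metis zero_less_one)

lemma OUGS_imp_BORS:
  assumes "OUGS T Us nU \<phi> h"
  shows "BORS T Us nU \<phi> h"
proof (rule BORS_if_bounded_on_balls)
  obtain \<sigma> \<gamma> where "class_K \<sigma>" "class_K \<gamma>"
    and bound: "\<forall>x. \<forall>u\<in>Us. \<forall>t\<in>T. norm (y t x u) \<le> \<sigma> (norm x) + \<gamma> (nU u)"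
    using assms unfolding OUGS_def class_Kinf_def by blast
  fix C :: real
  have "norm (y t x u) \<le> \<sigma> C + \<gamma> C" if "u \<in> Us" "t \<in> T" "norm x < C" "nU u < C" for x u t
  proof -
    have "\<sigma> (norm x) \<le> \<sigma> C" and "\<gamma> (nU u) \<le> \<gamma> C"
      using class_K_mono[OF \<open>class_K \<sigma>\<close>, of "norm x" C] class_K_mono[OF \<open>class_K \<gamma>\<close>, of "nU u" C]
        input_norm_nonneg that by auto
    moreover have "norm (y t x u) \<le> \<sigma> (norm x) + \<gamma> (nU u)" using bound that by blast
    ultimately show ?thesis by linarith
  qed
  then show "\<exists>B. \<forall>x. \<forall>u\<in>Us. \<forall>t\<in>T. norm x < C \<and> nU u < C \<longrightarrow> norm (y t x u) \<le> B"
    by blast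
qed

lemma OULS_imp_OCEP:
  assumes "OULS T Us nU \<phi> h"
  shows "OCEP T Us nU \<phi> h"
  unfolding OCEP_def
proof (intro ballI allI impI)
  obtain r \<sigma> \<gamma> where "0 < r" and \<sigma>: "class_K \<sigma>" and \<gamma>: "class_K \<gamma>"
    and bound: "\<forall>x. \<forall>u\<in>Us. \<forall>t\<in>T. norm x < r \<and> nU u < r \<longrightarrow> norm (y t x u) \<le> \<sigma> (norm x) + \<gamma> (nU u)"
    using assms unfolding OULS_def class_Kinf_def by blast
  fix \<tau> \<epsilon> :: real assume "0 < \<epsilon>"
  then obtain \<delta> where "0 < \<delta>" and \<delta>: "\<sigma> \<delta> + \<gamma> \<delta> \<le> \<epsilon>"
    using class_K_exists_le[OF class_K_add[OF \<sigma> \<gamma>]] by blast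
  have "norm (y t x u) \<le> \<epsilon>"
    if "u \<in> Us" "t \<in> T" "norm x \<le> min \<delta> (r / 2)" "nU u \<le> min \<delta> (r / 2)" for x u t
  proof -
    have "\<sigma> (norm x) \<le> \<sigma> \<delta>" and "\<gamma> (nU u) \<le> \<gamma> \<delta>"
      using class_K_mono[OF \<sigma>, of "norm x" \<delta>] class_K_mono[OF \<gamma>, of "nU u" \<delta>]
        input_norm_nonneg that by auto
    moreover have "norm (y t x u) \<le> \<sigma> (norm x) + \<gamma> (nU u)"
      using bound that \<open>0 < r\<close> by auto
    ultimately show ?thesis using \<delta> by linarith
  qed
  then show "\<exists>\<delta>>0. \<forall>x. \<forall>u\<in>Us. \<forall>t\<in>T. t \<le> \<tau> \<and> norm x \<le> \<delta> \<and> nU u \<le> \<delta> \<longrightarrow> norm (y t x u) \<le> \<epsilon>"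
    using \<open>0 < \<delta>\<close> \<open>0 < r\<close> by (intro exI[of _ "min \<delta> (r / 2)"]) auto
qed

lemma OUAG_OCEP_imp_small_output:
  assumes "OUAG T Us nU \<phi> h" and "OCEP T Us nU \<phi> h" and "0 < \<epsilon>"
  shows "\<exists>\<delta>>0. \<forall>x. \<forall>u\<in>Us. \<forall>t\<in>T. norm x < \<delta> \<and> nU u < \<delta> \<longrightarrow> norm (y t x u) \<le> \<epsilon>"
proof -
  obtain \<gamma> where \<gamma>: "class_K \<gamma>" and attraction: "\<forall>\<epsilon>>0. \<forall>r>0. \<forall>s>0. \<exists>\<tau>\<in>T. \<forall>x. \<forall>u\<in>Us. \<forall>t\<in>T.
      norm x < r \<and> nU u < s \<and> \<tau> \<le> t \<longrightarrow> norm (y t x u) \<le> \<epsilon> + \<gamma> (nU u)"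
    using assms(1) unfolding OUAG_def class_Kinf_def by blast
  obtain \<tau> where "\<tau> \<in> T" and late: "\<forall>x. \<forall>u\<in>Us. \<forall>t\<in>T.
      norm x < 1 \<and> nU u < 1 \<and> \<tau> \<le> t \<longrightarrow> norm (y t x u) \<le> \<epsilon> / 2 + \<gamma> (nU u)"
    using attraction[rule_format, of "\<epsilon> / 2" 1 1] assms(3) by auto
  obtain \<delta>1 where "0 < \<delta>1" and \<delta>1: "\<gamma> \<delta>1 \<le> \<epsilon> / 2"
    using class_K_exists_le[OF \<gamma>, of "\<epsilon> / 2"] assms(3) by auto
  obtain \<delta>2 where "0 < \<delta>2" and early: "\<forall>x. \<forall>u\<in>Us. \<forall>t\<in>T.
      t \<le> \<tau> \<and> norm x \<le> \<delta>2 \<and> nU u \<le> \<delta>2 \<longrightarrow> norm (y t x u) \<le> \<epsilon>"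
    using assms(2) \<open>\<tau> \<in> T\<close> assms(3) unfolding OCEP_def by blast
  have "norm (y t x u) \<le> \<epsilon>"
    if "u \<in> Us" "t \<in> T" "norm x < min 1 (min \<delta>1 \<delta>2)" "nU u < min 1 (min \<delta>1 \<delta>2)" for x u t
  proof (cases "\<tau> \<le> t")
    case True
    have "\<gamma> (nU u) \<le> \<gamma> \<delta>1"
      using class_K_mono[OF \<gamma> input_norm_nonneg, of u \<delta>1] that by simp
    moreover have "norm (y t x u) \<le> \<epsilon> / 2 + \<gamma> (nU u)"
      using late that True by simp
    ultimately show ?thesis using \<delta>1 by linarith
  next
    case False
    then show ?thesis using early that by simp
  qed
  then show ?thesis
    using \<open>0 < \<delta>1\<close> \<open>0 < \<delta>2\<close> by (intro exI[of _ "min 1 (min \<delta>1 \<delta>2)"]) auto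
qed

lemma OUAG_BORS_imp_bounded_output:
  assumes "OUAG T Us nU \<phi> h" and "BORS T Us nU \<phi> h" and "0 < R"
  shows "\<exists>M. \<forall>x. \<forall>u\<in>Us. \<forall>t\<in>T. norm x < R \<and> nU u < R \<longrightarrow> norm (y t x u) \<le> M"
proof -
  obtain \<gamma> where \<gamma>: "class_K \<gamma>" and attraction: "\<forall>\<epsilon>>0. \<forall>r>0. \<forall>s>0. \<exists>\<tau>\<in>T. \<forall>x. \<forall>u\<in>Us. \<forall>t\<in>T.
      norm x < r \<and> nU u < s \<and> \<tau> \<le> t \<longrightarrow> norm (y t x u) \<le> \<epsilon> + \<gamma> (nU u)"
    using assms(1) unfolding OUAG_def class_Kinf_def by blast
  obtain \<tau> where "\<tau> \<in> T" and late: "\<forall>x. \<forall>u\<in>Us. \<forall>t\<in>T.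
      norm x < R \<and> nU u < R \<and> \<tau> \<le> t \<longrightarrow> norm (y t x u) \<le> 1 + \<gamma> (nU u)"
    using attraction[rule_format, of 1 R R] assms(3) by auto
  obtain M where early: "\<forall>x. \<forall>u\<in>Us. \<forall>t\<in>T.
      norm x < R \<and> nU u < R \<and> t < \<tau> \<longrightarrow> norm (y t x u) \<le> M"
    using assms(2) \<open>\<tau> \<in> T\<close> assms(3) unfolding BORS_def bdd_above_def by blast
  have "norm (y t x u) \<le> max M (1 + \<gamma> R)"
    if "u \<in> Us" "t \<in> T" "norm x < R" "nU u < R" for x u t
  proof (cases "\<tau> \<le> t")
    case True
    have "\<gamma> (nU u) \<le> \<gamma> R"
      using class_K_mono[OF \<gamma> input_norm_nonneg, of u R] that by simp
    moreover have "norm (y t x u) \<le> 1 + \<gamma> (nU u)"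
      using late that True by simp
    ultimately show ?thesis by linarith
  next
    case False
    then have "norm (y t x u) \<le> M" using early that by (simp add: not_le)
    then show ?thesis by simp
  qed
  then show ?thesis by blast
qed

lemma OUAG_OCEP_BORS_imp_OUGS:
  assumes "OUAG T Us nU \<phi> h" and "OCEP T Us nU \<phi> h" and "BORS T Us nU \<phi> h"
  shows "OUGS T Us nU \<phi> h"
proof -
  interpret small_and_bounded_family "UNIV \<times> Us \<times> T"
    "\<lambda>(x, u, t). max (norm x) (nU u)" "\<lambda>(x, u, t). norm (y t x u)"
  proof
    fix \<epsilon> :: real assume "0 < \<epsilon>"
    then obtain \<delta> where "0 < \<delta>"
      and "\<forall>x. \<forall>u\<in>Us. \<forall>t\<in>T. norm x < \<delta> \<and> nU u < \<delta> \<longrightarrow> norm (y t x u) \<le> \<epsilon>"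
      using OUAG_OCEP_imp_small_output[OF assms(1,2)] by blast
    then show "\<exists>\<delta>>0. \<forall>i\<in>UNIV \<times> Us \<times> T.
        (case i of (x, u, t) \<Rightarrow> max (norm x) (nU u)) < \<delta> \<longrightarrow> (case i of (x, u, t) \<Rightarrow> norm (y t x u)) \<le> \<epsilon>"
      by (intro exI[of _ \<delta>]) auto
  next
    fix R :: real assume "0 < R"
    then obtain M
      where "\<forall>x. \<forall>u\<in>Us. \<forall>t\<in>T. norm x < R \<and> nU u < R \<longrightarrow> norm (y t x u) \<le> M"
      using OUAG_BORS_imp_bounded_output[OF assms(1,3)] by blast
    then show "\<exists>M. \<forall>i\<in>UNIV \<times> Us \<times> T.
        (case i of (x, u, t) \<Rightarrow> max (norm x) (nU u)) < R \<longrightarrow> (case i of (x, u, t) \<Rightarrow> norm (y t x u)) \<le> M"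
      by (intro exI[of _ M]) auto
  qed (auto simp: le_max_iff_disj)
  obtain \<alpha> where \<alpha>: "class_Kinf \<alpha>"
    and bound: "\<forall>(x, u, t)\<in>UNIV \<times> Us \<times> T. norm (y t x u) \<le> \<alpha> (max (norm x) (nU u))"
    using exists_class_Kinf_bound by auto
  have "norm (y t x u) \<le> \<alpha> (norm x) + \<alpha> (nU u)" if "u \<in> Us" "t \<in> T" for x u t
  proof -
    have "0 \<le> \<alpha> (norm x)" and "0 \<le> \<alpha> (nU u)"
      using \<alpha> class_K_nonneg[of \<alpha>] input_norm_nonneg[OF that(1)] by (auto simp: class_Kinf_def)
    then have "\<alpha> (max (norm x) (nU u)) \<le> \<alpha> (norm x) + \<alpha> (nU u)"
      by (simp add: max_def)
    moreover have "norm (y t x u) \<le> \<alpha> (max (norm x) (nU u))"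
      using bound that by auto
    ultimately show ?thesis by linarith
  qed
  then show ?thesis unfolding OUGS_def using \<alpha> by blast
qed

lemma OUAG_OUGS_imp_uniform_attraction:
  assumes "OUAG T Us nU \<phi> h" and "OUGS T Us nU \<phi> h"
  shows "\<exists>\<sigma> \<gamma>. class_Kinf \<sigma> \<and> class_Kinf \<gamma> \<and>
    (\<forall>x. \<forall>u\<in>Us. \<forall>t\<in>T. norm (y t x u) \<le> \<sigma> (norm x) + \<gamma> (nU u)) \<and>
    (\<forall>\<epsilon>>0. \<forall>R>0. \<exists>\<tau>. \<forall>x. \<forall>u\<in>Us. \<forall>t\<in>T. norm x < R \<and> \<tau> \<le> t \<longrightarrow> norm (y t x u) \<le> \<epsilon> + \<gamma> (nU u))"
proof -
  obtain \<gamma>a where \<gamma>a: "class_Kinf \<gamma>a" and attraction: "\<forall>\<epsilon>>0. \<forall>r>0. \<forall>s>0. \<exists>\<tau>\<in>T. \<forall>x. \<forall>u\<in>Us. \<forall>t\<in>T.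
      norm x < r \<and> nU u < s \<and> \<tau> \<le> t \<longrightarrow> norm (y t x u) \<le> \<epsilon> + \<gamma>a (nU u)"
    using assms(1) unfolding OUAG_def by blast
  obtain \<sigma> \<gamma> where \<sigma>: "class_Kinf \<sigma>" and \<gamma>: "class_Kinf \<gamma>"
    and bound: "\<forall>x. \<forall>u\<in>Us. \<forall>t\<in>T. norm (y t x u) \<le> \<sigma> (norm x) + \<gamma> (nU u)"
    using assms(2) unfolding OUGS_def by blast
  \<comment> \<open>the summand \<open>\<sigma>\<close> lets the global bound take over for inputs too large for OUAG\<close>
  define \<gamma>' where "\<gamma>' r = \<sigma> r + \<gamma> r + \<gamma>a r" for r
  have "class_Kinf \<gamma>'"
    unfolding \<gamma>'_def using \<sigma> \<gamma> \<gamma>a by (intro class_Kinf_add) (auto simp: class_Kinf_def)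
  have nonneg: "0 \<le> \<sigma> (nU u) \<and> 0 \<le> \<gamma> (nU u) \<and> 0 \<le> \<gamma>a (nU u)" if "u \<in> Us" for u
    using \<sigma> \<gamma> \<gamma>a class_K_nonneg input_norm_nonneg[OF that] by (auto simp: class_Kinf_def)
  have global: "norm (y t x u) \<le> \<sigma> (norm x) + \<gamma>' (nU u)" if "u \<in> Us" "t \<in> T" for x u t
  proof -
    have "norm (y t x u) \<le> \<sigma> (norm x) + \<gamma> (nU u)" using bound that by blast
    then show ?thesis using nonneg[OF that(1)] unfolding \<gamma>'_def by linarith
  qed
  have "\<exists>\<tau>. \<forall>x. \<forall>u\<in>Us. \<forall>t\<in>T. norm x < R \<and> \<tau> \<le> t \<longrightarrow> norm (y t x u) \<le> \<epsilon> + \<gamma>' (nU u)"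
    if "0 < \<epsilon>" "0 < R" for \<epsilon> R
  proof -
    obtain \<tau> where late: "\<forall>x. \<forall>u\<in>Us. \<forall>t\<in>T.
        norm x < R \<and> nU u < R \<and> \<tau> \<le> t \<longrightarrow> norm (y t x u) \<le> \<epsilon> + \<gamma>a (nU u)"
      using attraction[rule_format, of \<epsilon> R R] \<open>0 < \<epsilon>\<close> \<open>0 < R\<close> by blast
    have "norm (y t x u) \<le> \<epsilon> + \<gamma>' (nU u)" if "u \<in> Us" "t \<in> T" "norm x < R" "\<tau> \<le> t" for x u t
    proof (cases "nU u < R")
      case True
      then have "norm (y t x u) \<le> \<epsilon> + \<gamma>a (nU u)" using late that by blast
      then show ?thesis using nonneg[OF that(1)] unfolding \<gamma>'_def by linarith
    next
      case False
      then have "\<sigma> (norm x) \<le> \<sigma> (nU u)"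
        using \<sigma> class_K_mono[of \<sigma> "norm x" "nU u"] that by (simp add: class_Kinf_def)
      moreover have "norm (y t x u) \<le> \<sigma> (norm x) + \<gamma> (nU u)" using bound that by blast
      ultimately show ?thesis using nonneg[OF that(1)] \<open>0 < \<epsilon>\<close> unfolding \<gamma>'_def by linarith
    qed
    then show ?thesis by blast
  qed
  then show ?thesis using \<sigma> \<open>class_Kinf \<gamma>'\<close> global by blast
qed

lemma OUAG_OUGS_imp_IOS:
  assumes "OUAG T Us nU \<phi> h" and "OUGS T Us nU \<phi> h"
  shows "IOS T Us nU \<phi> h"
proof -
  obtain \<sigma> \<gamma> where \<sigma>: "class_Kinf \<sigma>" and \<gamma>: "class_Kinf \<gamma>"
    and global: "\<forall>x. \<forall>u\<in>Us. \<forall>t\<in>T. norm (y t x u) \<le> \<sigma> (norm x) + \<gamma> (nU u)"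
    and attraction: "\<forall>\<epsilon>>0. \<forall>R>0. \<exists>\<tau>. \<forall>x. \<forall>u\<in>Us. \<forall>t\<in>T.
      norm x < R \<and> \<tau> \<le> t \<longrightarrow> norm (y t x u) \<le> \<epsilon> + \<gamma> (nU u)"
    using OUAG_OUGS_imp_uniform_attraction[OF assms] by blast
  interpret uniformly_decaying_family "UNIV \<times> Us \<times> T" \<sigma>
    "\<lambda>(x, u, t). norm x" "\<lambda>(x, u, t). t" "\<lambda>(x, u, t). norm (y t x u) - \<gamma> (nU u)"
  proof
    fix \<epsilon> R :: real assume "0 < \<epsilon>" "0 < R"
    then obtain \<tau> where "\<forall>x. \<forall>u\<in>Us. \<forall>t\<in>T. norm x < R \<and> \<tau> \<le> t \<longrightarrow> norm (y t x u) \<le> \<epsilon> + \<gamma> (nU u)"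
      using attraction by blast
    then show "\<exists>\<tau>. \<forall>i\<in>UNIV \<times> Us \<times> T. (case i of (x, u, t) \<Rightarrow> norm x) < R \<and>
        \<tau> \<le> (case i of (x, u, t) \<Rightarrow> t) \<longrightarrow> (case i of (x, u, t) \<Rightarrow> norm (y t x u) - \<gamma> (nU u)) \<le> \<epsilon>"
      by (intro exI[of _ \<tau>]) (auto simp: diff_le_eq add.commute)
  qed (use \<sigma> global time_nonneg in \<open>auto simp: diff_le_eq add.commute\<close>)
  obtain \<beta> where \<beta>: "class_KL \<beta>"
    and bound: "\<forall>(x, u, t)\<in>UNIV \<times> Us \<times> T. norm (y t x u) - \<gamma> (nU u) \<le> \<beta> (norm x) t"
    using exists_class_KL_bound by auto
  have "norm (y t x u) \<le> \<beta> (norm x) t + \<gamma> (nU u)" if "u \<in> Us" "t \<in> T" for x u t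
  proof -
    have "norm (y t x u) - \<gamma> (nU u) \<le> \<beta> (norm x) t" using bound that by blast
    then show ?thesis by linarith
  qed
  then show ?thesis unfolding IOS_def using \<beta> \<gamma> by blast
qed

end

lemma ctrl_sys_output_system:
  assumes "ctrl_sys T Us nU \<phi> h"
  shows "output_system T Us nU"
proof
  have T: "T = \<nat> \<or> T = {0..}" using assms unfolding ctrl_sys_def by blast
  then show "t \<in> T \<Longrightarrow> 0 \<le> t" for t by (auto elim: Nats_cases)
  show "\<exists>\<tau>\<in>T. a \<le> \<tau>" for a
    using T by (auto intro: bexI[of _ "of_nat (nat \<lceil>a\<rceil>)"] bexI[of _ "max 0 a"] simp: real_nat_ceiling_ge)
  show "u \<in> Us \<Longrightarrow> 0 \<le> nU u" for u using assms unfolding ctrl_sys_def by blast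
qed

theorem theorem1:
  fixes T :: "real set" and Us :: "(real \<Rightarrow> 'u::real_vector) set" and nU :: "(real \<Rightarrow> 'u) \<Rightarrow> real"
    and \<phi> :: "real \<Rightarrow> 'x::real_normed_vector \<Rightarrow> (real \<Rightarrow> 'u) \<Rightarrow> 'x"
    and h :: "'x \<Rightarrow> 'u \<Rightarrow> 'y::real_normed_vector"
  assumes "ctrl_sys T Us nU \<phi> h"
  shows "(IOS T Us nU \<phi> h \<longleftrightarrow> OUAG T Us nU \<phi> h \<and> OCEP T Us nU \<phi> h \<and> BORS T Us nU \<phi> h)
       \<and> (IOS T Us nU \<phi> h \<longleftrightarrow> OUAG T Us nU \<phi> h \<and> OULS T Us nU \<phi> h \<and> BORS T Us nU \<phi> h)
       \<and> (IOS T Us nU \<phi> h \<longleftrightarrow> OUAG T Us nU \<phi> h \<and> OUGS T Us nU \<phi> h)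
       \<and> (IOS T Us nU \<phi> h \<longleftrightarrow> OCAG T Us nU \<phi> h \<and> OULS T Us nU \<phi> h)"
proof -
  interpret output_system T Us nU \<phi> h
    using assms by (rule ctrl_sys_output_system)
  note IOS_imp_OCAG IOS_imp_OUGS OCAG_imp_OUAG OCAG_imp_BORS OUGS_imp_OULS OUGS_imp_BORS
    OULS_imp_OCEP OUAG_OCEP_BORS_imp_OUGS OUAG_OUGS_imp_IOS
  then show ?thesis by blast
qed

end
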